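(* In the Truthful Interval Covering setting with $n$ agents (with $n$ a positive multiple of $6$) and unit-length intervals, the Uniform-Statistic mechanism has approximation ratio at most $5/3$: for every instance $\mathcal{I}$, $\mathbb{E}[\mathrm{SC}(\mathcal{M}(\mathcal{I}))]\le \frac{5}{3}\min_C\mathrm{SC}(C)$.
   Context: There are $n$ agents; agent $i$ has an interval $I_i=[s_i,s_i+1]$ of length $1$; an instance is $\mathcal{I}=(I_1,\dots,I_n)$, with agents indexed so that $s_1\le s_2\le\dots\le s_n$. A unit covering interval $C$ is placed; $\mathrm{cost}_i(C)=1-|I_i\cap C|$ ($|\cdot|$ = length), $\mathrm{SC}(C)=\sum_i\mathrm{cost}_i(C)$, minimum over all unit intervals $C$. The Uniform-Statistic mechanism lets $\ell$ be the $(n/3)$-th agent, $m$ the median agent (the $(n/2)$-th agent) and $r$ the $(2n/3)$-th agent in this order, and places $C$ at $I_\ell$, $I_m$ or $I_r$, each with probability $1/3$. The expectation is over this randomization. *)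

theory Defs
  imports Complex_Main
begin

definition overlap :: "real \<Rightarrow> real \<Rightarrow> real" where
  "overlap a b = max 0 (min (a + 1) (b + 1) - max a b)"

definition agent_cost :: "real \<Rightarrow> real \<Rightarrow> real" where
  "agent_cost si c = 1 - overlap si c"

text \<open>Social cost; agents are indexed 1..n, agent i has interval [s i, s i + 1].\<close>
definition SC :: "nat \<Rightarrow> (nat \<Rightarrow> real) \<Rightarrow> real \<Rightarrow> real" where
  "SC n s c = (\<Sum>i=1..n. agent_cost (s i) c)"

text \<open>Expected social cost of the Uniform-Statistic mechanism: C is placed at
  I_l, I_m, I_r (agents n/3, n/2, 2n/3) each with probability 1/3.\<close>
definition US_expected_SC :: "nat \<Rightarrow> (nat \<Rightarrow> real) \<Rightarrow> real" where
  "US_expected_SC n s =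
     (1/3) * SC n s (s (n div 3)) + (1/3) * SC n s (s (n div 2)) + (1/3) * SC n s (s (2 * n div 3))"

end

theory Submission
  imports Defs
begin

(* The cost min 1 |x - c| of an agent at x is a metric on the line that grows as the two points
   move apart. Cutting the n = 6k sorted agents into six blocks of k, the three statistics
   a = s(2k), b = s(3k), e = s(4k) sit on block boundaries, so the j-th agents of the six blocks
   form points p0, p1 <= a <= p2 <= b <= p3 <= e <= p4, p5. For such six points and any c, the total
   distance to a, b and e is at most five times the total distance to c: after a reflection c <= b,
   and then the triangle inequality through c and monotonicity suffice. Summing over j gives
   SC(a) + SC(b) + SC(e) <= 5 SC(c). *)

lemma sum_atLeast1_blocks:
  fixes h :: "nat \<Rightarrow> 'a::comm_monoid_add"
  shows "(\<Sum>i=1..m*k. h i) = (\<Sum>t<m. \<Sum>j<k. h (t*k + j + 1))"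
proof -
  have "(\<Sum>i=1..m*k. h i) = (\<Sum>i<m*k. h (i + 1))"
    using sum.atLeast1_atMost_eq by simp
  also have "\<dots> = (\<Sum>t<m. \<Sum>i\<in>{t*k..<t*k+k}. h (i + 1))"
    by (rule sum.nat_group[symmetric])
  also have "\<dots> = (\<Sum>t<m. \<Sum>j<k. h (t*k + j + 1))"
    by (simp add: sum.shift_bounds_nat_ivl[of _ 0 "t*k" k for t, simplified]
        lessThan_atLeast0 add.commute)
  finally show ?thesis .
qed

lemma sum_lessThan_6:
  fixes f :: "nat \<Rightarrow> 'a::comm_monoid_add"
  shows "(\<Sum>t<6. f t) = f 0 + f 1 + f 2 + f 3 + f 4 + f 5"
  by (simp add: eval_nat_numeral ac_simps)

locale monotone_line_metric =
  fixes d :: "real \<Rightarrow> real \<Rightarrow> real"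
  assumes nonneg: "0 \<le> d x y"
    and commute: "d x y = d y x"
    and triangle: "d x y \<le> d x z + d z y"
    and mono_right: "x \<le> y \<Longrightarrow> y \<le> z \<Longrightarrow> d x y \<le> d x z"
    and mono_left: "x \<le> y \<Longrightarrow> y \<le> z \<Longrightarrow> d y z \<le> d x z"
begin

lemma mono_right': "x \<le> y \<Longrightarrow> y \<le> z \<Longrightarrow> d y x \<le> d z x"
  using mono_right commute by metis

lemma mono_left': "x \<le> y \<Longrightarrow> y \<le> z \<Longrightarrow> d z y \<le> d z x"
  using mono_left commute by metis

lemma reflect: "monotone_line_metric (\<lambda>x y. d (- x) (- y))"
proof
  fix x y z :: real
  show "0 \<le> d (- x) (- y)" "d (- x) (- y) = d (- y) (- x)"
    "d (- x) (- y) \<le> d (- x) (- z) + d (- z) (- y)"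
    by (rule nonneg commute triangle)+
  assume "x \<le> y" "y \<le> z"
  then show "d (- x) (- y) \<le> d (- x) (- z)" "d (- y) (- z) \<le> d (- x) (- z)"
    by (auto intro: mono_left' mono_right')
qed

lemma six_point_bound_left:
  fixes p :: "nat \<Rightarrow> real"
  assumes order: "p 0 \<le> a" "p 1 \<le> a" "a \<le> p 2" "p 2 \<le> b" "b \<le> p 3" "p 3 \<le> e" "e \<le> p 4" "e \<le> p 5"
    and "c \<le> b"
  shows "(\<Sum>t<6. d (p t) a + d (p t) b + d (p t) e) \<le> 5 * (\<Sum>t<6. d (p t) c)"
proof -
  let ?T = "\<lambda>q. d q a + d q b + d q e"
  have through_c: "?T q \<le> 3 * d q c + d c a + d c b + d c e" for q
    using triangle[of q a c] triangle[of q b c] triangle[of q e c]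
      commute[of a c] commute[of b c] commute[of e c] by linarith
  have "?T (p 0) + ?T (p 1) + ?T (p 2) + ?T (p 3) + ?T (p 4) + ?T (p 5)
    \<le> 5 * (d (p 0) c + d (p 1) c + d (p 2) c + d (p 3) c + d (p 4) c + d (p 5) c)"
  \<comment> \<open>Every point pays its detour through c; the detours d c a, d c b, d c e are then
    charged to the points that lie beyond a, b, e as seen from c.\<close>
  proof (cases "c \<le> a")
    case True
    have chain: "c \<le> a" "a \<le> b" "b \<le> e" using True order by linarith+
    have far: "?T q \<le> 3 * d q c" "d c e \<le> d q c" if "e \<le> q" for q
      using that chain mono_left'[of c a q] mono_left'[of c b q] mono_left'[of c e q]
        mono_right'[of c e q] commute[of c e] by linarith+
    have right: "?T (p 3) \<le> 2 * d (p 3) c + d c e" "d c b \<le> d (p 3) c"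
      using order chain mono_left'[of c a "p 3"] mono_left'[of c b "p 3"] mono_left[of b "p 3" e]
        mono_left[of c b e] mono_right'[of c b "p 3"] commute[of c b] by linarith+
    have left: "?T (p 2) \<le> d (p 2) c + d c b + d c e" "d c a \<le> d (p 2) c"
      using order chain mono_left'[of c a "p 2"] mono_left[of a "p 2" b] mono_left[of a "p 2" e]
        mono_left[of c a b] mono_left[of c a e] mono_right'[of c a "p 2"] commute[of c a] by linarith+
    show ?thesis
      using far[OF order(7)] far[OF order(8)] right left through_c[of "p 0"] through_c[of "p 1"]
        nonneg[of "p 0" c] nonneg[of "p 1" c] nonneg[of "p 2" c]
      unfolding distrib_left by linarith
  next
    case False
    have chain: "a \<le> c" "c \<le> b" "b \<le> e" using False order \<open>c \<le> b\<close> by linarith+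
    have far: "?T q \<le> 3 * d q c + d c a" "d c e \<le> d q c" if "e \<le> q" for q
      using that chain triangle[of q a c] mono_left'[of c b q] mono_left'[of c e q]
        mono_right'[of c e q] commute[of c e] by linarith+
    have right: "?T (p 3) \<le> 2 * d (p 3) c + d c a + d c e" "d c b \<le> d (p 3) c"
      using order chain triangle[of "p 3" a c] mono_left'[of c b "p 3"] mono_left[of c "p 3" e]
        mono_right'[of c b "p 3"] commute[of c b] by linarith+
    have near: "?T q \<le> 3 * d q c + d c b + d c e" "d c a \<le> d q c" if "q \<le> a" for q
      using that chain mono_right[of q a c] triangle[of q b c] triangle[of q e c]
        mono_left'[of q a c] commute[of c q] by linarith+
    have "d c b \<le> d c e"
      using chain(2,3) by (rule mono_right)
    then show ?thesis
      using far[OF order(7)] far[OF order(8)] right through_c[of "p 2"] near[OF order(1)] near[OF order(2)]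
        nonneg[of "p 2" c]
      unfolding distrib_left by linarith
  qed
  then show ?thesis unfolding sum_lessThan_6 .
qed

lemma six_point_bound:
  fixes p :: "nat \<Rightarrow> real"
  assumes order: "p 0 \<le> a" "p 1 \<le> a" "a \<le> p 2" "p 2 \<le> b" "b \<le> p 3" "p 3 \<le> e" "e \<le> p 4" "e \<le> p 5"
  shows "(\<Sum>t<6. d (p t) a + d (p t) b + d (p t) e) \<le> 5 * (\<Sum>t<6. d (p t) c)"
proof (cases "c \<le> b")
  case True
  then show ?thesis by (rule six_point_bound_left[OF order])
next
  case False
  interpret reflected: monotone_line_metric "\<lambda>x y. d (- x) (- y)"
    by (rule reflect)
  have "(\<Sum>t<6. d (p (5 - t)) e + d (p (5 - t)) b + d (p (5 - t)) a)
    \<le> 5 * (\<Sum>t<6. d (p (5 - t)) c)"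
    using reflected.six_point_bound_left[of "\<lambda>t. - p (5 - t)" "- e" "- b" "- a" "- c"] order False
    by simp
  then show ?thesis
    unfolding sum_lessThan_6 by simp
qed

lemma sum_dist_to_statistics_le:
  fixes s :: "nat \<Rightarrow> real" and k :: nat
  assumes sorted: "\<And>i j. 1 \<le> i \<Longrightarrow> i \<le> j \<Longrightarrow> j \<le> 6 * k \<Longrightarrow> s i \<le> s j"
  shows "(\<Sum>i=1..6*k. d (s i) (s (2*k)) + d (s i) (s (3*k)) + d (s i) (s (4*k)))
    \<le> 5 * (\<Sum>i=1..6*k. d (s i) c)"
proof -
  let ?T = "\<lambda>x. d x (s (2*k)) + d x (s (3*k)) + d x (s (4*k))"
  have "(\<Sum>i=1..6*k. ?T (s i)) = (\<Sum>t<6. \<Sum>j<k. ?T (s (t*k + j + 1)))"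
    by (rule sum_atLeast1_blocks)
  also have "\<dots> = (\<Sum>j<k. \<Sum>t<6. ?T (s (t*k + j + 1)))"
    by (rule sum.swap)
  also have "\<dots> \<le> (\<Sum>j<k. 5 * (\<Sum>t<6. d (s (t*k + j + 1)) c))"
  proof (rule sum_mono)
    fix j assume "j \<in> {..<k}"
    then show "(\<Sum>t<6. ?T (s (t*k + j + 1))) \<le> 5 * (\<Sum>t<6. d (s (t*k + j + 1)) c)"
      by (intro six_point_bound) (auto intro: sorted)
  qed
  also have "\<dots> = 5 * (\<Sum>t<6. \<Sum>j<k. d (s (t*k + j + 1)) c)"
    by (simp add: sum_distrib_left sum.swap[of _ "{..<6}"])
  also have "\<dots> = 5 * (\<Sum>i=1..6*k. d (s i) c)"
    by (simp only: sum_atLeast1_blocks)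
  finally show ?thesis .
qed

end

lemma agent_cost_eq: "agent_cost x c = min 1 \<bar>x - c\<bar>"
  unfolding agent_cost_def overlap_def by (simp add: abs_if min_def max_def)

interpretation cost: monotone_line_metric agent_cost
  by unfold_locales (auto simp: agent_cost_eq abs_minus_commute split: abs_split)

theorem theorem5:
  fixes n :: nat and s :: "nat \<Rightarrow> real"
  assumes "n > 0" and "6 dvd n"
    and sorted: "\<And>i j. 1 \<le> i \<Longrightarrow> i \<le> j \<Longrightarrow> j \<le> n \<Longrightarrow> s i \<le> s j"
  shows "US_expected_SC n s \<le> 5/3 * (INF c. SC n s c)"
proof -
  obtain k where n: "n = 6 * k"
    using \<open>6 dvd n\<close> by blast
  have statistics: "n div 3 = 2 * k" "n div 2 = 3 * k" "2 * n div 3 = 4 * k"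
    using n by auto
  have bound: "3 * US_expected_SC n s \<le> 5 * SC n s c" for c
  proof -
    have "3 * US_expected_SC n s = SC n s (s (2 * k)) + SC n s (s (3 * k)) + SC n s (s (4 * k))"
      unfolding US_expected_SC_def statistics by simp
    also have "\<dots> \<le> 5 * SC n s c"
      using cost.sum_dist_to_statistics_le[of k s c] sorted
      unfolding SC_def n sum.distrib by blast
    finally show ?thesis .
  qed
  have "3/5 * US_expected_SC n s \<le> SC n s c" for c
    using bound[of c] by simp
  then have "3/5 * US_expected_SC n s \<le> (INF c. SC n s c)"
    by (rule cINF_greatest[OF UNIV_not_empty])
  then show ?thesis
    by simp
qed

end
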